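(* Let $(X,T)$ be a minimal system and $d\ge2$. Then there is a dense $G_\delta$ subset $X_0\subset X$ such that for every $x\in X_0$, $\{(x_1,\dots,x_d)\in N_d(X):x_1=x\}=\{x\}\times L_x$, where $L_x=\overline{\{(T^nx,T^{2n}x,\dots,T^{(d-1)n}x):n\in\mathbb{Z}\}}$ is the orbit closure of $(x,\dots,x)\in X^{d-1}$ under $T\times T^2\times\cdots\times T^{d-1}$.
   Context: $N_d(X)=\overline{\{(T^{p+q}x,\dots,T^{p+dq}x):x\in X,p,q\in\mathbb{Z}\}}\subset X^d$. *)

theory Defs
  imports "HOL-Analysis.Analysis"
begin

definition tds :: "'a::metric_space set \<Rightarrow> ('a \<Rightarrow> 'a) \<Rightarrow> bool" where
  "tds X T \<longleftrightarrow> X \<noteq> {} \<and> compact X \<and> continuous_on X T \<and> inj_on T X \<and> T ` X = X"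

definition minimal_system :: "'a::metric_space set \<Rightarrow> ('a \<Rightarrow> 'a) \<Rightarrow> bool" where
  "minimal_system X T \<longleftrightarrow> tds X T \<and>
     (\<forall>A. A \<subseteq> X \<and> A \<noteq> {} \<and> closed A \<and> T ` A \<subseteq> A \<longrightarrow> A = X)"

definition tpow :: "'a set \<Rightarrow> ('a \<Rightarrow> 'a) \<Rightarrow> int \<Rightarrow> 'a \<Rightarrow> 'a" where
  "tpow X T n x = (if n \<ge> 0 then (T ^^ nat n) x else (inv_into X T ^^ nat (- n)) x)"

text \<open>Points of X^k are represented as functions on indices {1..k} (restricted, i.e. undefined
  outside), carrying the product topology.\<close>

definition Nd :: "'a::metric_space set \<Rightarrow> ('a \<Rightarrow> 'a) \<Rightarrow> nat \<Rightarrow> (nat \<Rightarrow> 'a) set" where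
  "Nd X T d = closure {restrict (\<lambda>i. tpow X T (p + int i * q) x) {1..d} | x p q. x \<in> X}"

definition Lx :: "'a::metric_space set \<Rightarrow> ('a \<Rightarrow> 'a) \<Rightarrow> nat \<Rightarrow> 'a \<Rightarrow> (nat \<Rightarrow> 'a) set" where
  "Lx X T d x = closure {restrict (\<lambda>j. tpow X T (int j * n) x) {1..d-1} | n. True}"

definition tcons :: "nat \<Rightarrow> 'a \<Rightarrow> (nat \<Rightarrow> 'a) \<Rightarrow> (nat \<Rightarrow> 'a)" where
  "tcons d x y = restrict (\<lambda>i. if i = 1 then x else y (i - 1)) {1..d}"

end

theory Submission
  imports Defs
begin

text \<open>
  For a box B of radius e around c in X^(d-1), the set of x whose orbit under
  T \<times> T^2 \<times> ... \<times> T^(d-1) meets B is open in X. By Baire's theorem, for a countable family of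
  boxes the points x lying in each such set as soon as they lie in its closure form a dense
  G-delta set. If (x, y) \<in> N_d(X), some (T^(p+q) x', ..., T^(p+dq) x') is close to (x, y), so the
  point T^(p+q) x' near x has a diagonal orbit entering every box around y: x lies in the closure
  of the corresponding open sets, hence, being generic, in the sets themselves, which for boxes
  with centres in a countable dense set and rational radii means y \<in> L_x.
\<close>

lemma closure_coordinate_in_closed:
  fixes S :: "('i \<Rightarrow> 'a::topological_space) set"
  assumes "z \<in> closure S" "closed C" "\<And>s. s \<in> S \<Longrightarrow> s i \<in> C"
  shows "z i \<in> C"
proof -
  have "closed ((\<lambda>f. f i) -` C)"
    using continuous_on_closed_vimage[of UNIV "\<lambda>f. f i"] continuous_on_product_coordinates assms(2)
    by auto
  then have "closure S \<subseteq> (\<lambda>f. f i) -` C"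
    using assms by (intro closure_minimal) auto
  then show ?thesis using assms by auto
qed

lemma in_closure_extensionalI:
  fixes S :: "('i \<Rightarrow> 'a::metric_space) set"
  assumes "finite I" "S \<subseteq> extensional I" "z \<in> extensional I"
    and approx: "\<And>e. e > 0 \<Longrightarrow> \<exists>s\<in>S. \<forall>i\<in>I. dist (s i) (z i) < e"
  shows "z \<in> closure S"
  unfolding closure_iff_nhds_not_empty
proof (intro allI impI)
  fix A U assume "U \<subseteq> A" "open U" "z \<in> U"
  then have "openin (product_topology (\<lambda>i. euclidean) UNIV) U" by (simp add: open_fun_def)
  from product_topology_open_contains_basis[OF this \<open>z \<in> U\<close>] obtain B where
    B: "z \<in> (\<Pi>\<^sub>E i\<in>UNIV. B i)" "\<And>i. open (B i)" "(\<Pi>\<^sub>E i\<in>UNIV. B i) \<subseteq> U" by auto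
  have "\<forall>i\<in>I. \<exists>r>0. ball (z i) r \<subseteq> B i"
    using B by (meson PiE_mem UNIV_I openE)
  then obtain r where r: "\<And>i. i \<in> I \<Longrightarrow> r i > 0 \<and> ball (z i) (r i) \<subseteq> B i" by metis
  define e where "e = Min (insert 1 (r ` I))"
  have "e > 0" using r assms(1) by (auto simp: e_def)
  have e_le: "e \<le> r i" if "i \<in> I" for i using assms(1) that by (auto simp: e_def)
  obtain s where s: "s \<in> S" "\<forall>i\<in>I. dist (s i) (z i) < e" using approx[OF \<open>e > 0\<close>] by auto
  have "s i \<in> B i" for i
  proof (cases "i \<in> I")
    case True
    then have "s i \<in> ball (z i) (r i)" using s e_le[OF True] by (auto simp: dist_commute)
    then show ?thesis using r True by blast
  next
    case False
    then have "s i = z i" using s(1) assms(2,3) by (auto simp: extensional_def)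
    then show ?thesis using B(1) by auto
  qed
  then have "s \<in> (\<Pi>\<^sub>E i\<in>UNIV. B i)" by auto
  then show "S \<inter> A \<noteq> {}" using s B \<open>U \<subseteq> A\<close> by blast
qed

lemma in_closure_extensional_iff:
  fixes S :: "('i \<Rightarrow> 'a::metric_space) set"
  assumes "finite I" "S \<subseteq> extensional I"
  shows "z \<in> closure S \<longleftrightarrow>
           z \<in> extensional I \<and> (\<forall>e>0. \<exists>s\<in>S. \<forall>i\<in>I. dist (s i) (z i) < e)"
proof
  assume z: "z \<in> closure S"
  have "z i \<in> {undefined}" if "i \<notin> I" for i
    using closure_coordinate_in_closed[OF z] assms(2) that by (auto simp: extensional_def)
  moreover have "\<exists>s\<in>S. \<forall>i\<in>I. dist (s i) (z i) < e" if "e > 0" for e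
  proof -
    let ?U = "{f. \<forall>i\<in>I. f (id i) \<in> ball (z i) e}"
    have "open ?U"
      by (rule product_topology_basis') (use assms(1) in auto)
    moreover have "z \<in> ?U" using \<open>e > 0\<close> by auto
    ultimately have "S \<inter> ?U \<noteq> {}"
      using z unfolding closure_iff_nhds_not_empty by blast
    then show ?thesis by (auto simp: dist_commute)
  qed
  ultimately show "z \<in> extensional I \<and> (\<forall>e>0. \<exists>s\<in>S. \<forall>i\<in>I. dist (s i) (z i) < e)"
    by (auto simp: extensional_def)
qed (use in_closure_extensionalI assms in blast)

lemma closure_approachable_PiE:
  assumes "\<And>j. j \<in> I \<Longrightarrow> y j \<in> closure C" "e > 0"
  shows "\<exists>c \<in> (\<Pi>\<^sub>E j\<in>I. C). \<forall>j\<in>I. dist (y j) (c j) < e"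
proof -
  have "\<forall>j\<in>I. \<exists>c\<in>C. dist (y j) c < e"
  proof
    fix j assume "j \<in> I"
    show "\<exists>c\<in>C. dist (y j) c < e" using closure_approachableD[OF assms(1)[OF \<open>j \<in> I\<close>] assms(2)] .
  qed
  then obtain c where "\<And>j. j \<in> I \<Longrightarrow> c j \<in> C \<and> dist (y j) (c j) < e" by metis
  then show ?thesis by (intro bexI[of _ "restrict c I"]) auto
qed

lemma compact_imp_countable_dense_subset:
  fixes X :: "'a::metric_space set"
  assumes "compact X"
  obtains C where "countable C" "C \<subseteq> X" "X \<subseteq> closure C"
proof -
  have "\<forall>n::nat. \<exists>K. finite K \<and> K \<subseteq> X \<and> X \<subseteq> (\<Union>c\<in>K. ball c (inverse (Suc n)))"
    using seq_compact_imp_totally_bounded[OF compact_imp_seq_compact[OF assms]] by simp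
  then obtain K where K: "\<And>n. finite (K n)" "\<And>n. K n \<subseteq> X"
    "\<And>n. X \<subseteq> (\<Union>c\<in>K n. ball c (inverse (Suc n)))"
    by metis
  have "x \<in> closure (\<Union>(range K))" if "x \<in> X" for x
    unfolding closure_approachable
  proof (intro allI impI)
    fix e :: real assume "e > 0"
    then obtain n where n: "inverse (real (Suc n)) < e"
      using reals_Archimedean by blast
    obtain c where "c \<in> K n" "dist c x < inverse (Suc n)"
      using K(3) \<open>x \<in> X\<close> by (fastforce simp: dist_commute)
    with n show "\<exists>c\<in>\<Union>(range K). dist c x < e" by (metis UN_I UNIV_I order.strict_trans)
  qed
  moreover have "countable (\<Union>(range K))" using K(1) by (simp add: countable_finite)
  ultimately show ?thesis using that K(2) by (meson UN_least subsetI)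
qed

lemma Baire_stable_points:
  fixes X :: "'a::metric_space set"
  assumes "compact X" "countable J" "\<And>j. j \<in> J \<Longrightarrow> openin (top_of_set X) (U j)"
  obtains X0 where "X0 \<subseteq> X" "gdelta_in (top_of_set X) X0" "X \<subseteq> closure X0"
    "\<And>x j. x \<in> X0 \<Longrightarrow> j \<in> J \<Longrightarrow> x \<in> closure (U j) \<Longrightarrow> x \<in> U j"
proof -
  define G where "G j = U j \<union> (X - closure (U j))" for j
  define X0 where "X0 = \<Inter> (insert X (G ` J))"
  have G_open_dense: "openin (top_of_set X) S \<and> (top_of_set X) closure_of S = X"
    if S: "S \<in> insert X (G ` J)" for S
  proof -
    have "openin (top_of_set X) S \<and> S \<subseteq> X \<and> X \<subseteq> closure S"
    proof (cases "S = X")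
      case True then show ?thesis using closure_subset by auto
    next
      case False
      then obtain j where j: "j \<in> J" "S = G j" using S by auto
      have "openin (top_of_set X) (X \<inter> - closure (U j))" by (intro openin_open_Int) auto
      moreover have "X - closure (U j) = X \<inter> - closure (U j)" by auto
      ultimately have "openin (top_of_set X) (G j)"
        unfolding G_def using assms(3)[OF j(1)] by (metis openin_Un)
      moreover have "G j \<subseteq> X" using openin_subset[OF assms(3)[OF j(1)]] by (auto simp: G_def)
      moreover have "X \<subseteq> closure (G j)"
        using closure_mono[of "U j" "G j"] closure_subset[of "G j"] by (auto simp: G_def)
      ultimately show ?thesis using j by simp
    qed
    then show ?thesis by (auto simp: closure_of_subtopology Int_absorb1)
  qed
  have "X0 \<subseteq> X" by (auto simp: X0_def)
  moreover have "gdelta_in (top_of_set X) X0"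
    unfolding X0_def
    by (rule gdelta_in_Inter) (use assms(2) G_open_dense in \<open>auto intro: open_imp_gdelta_in\<close>)
  moreover have "(top_of_set X) closure_of X0 = X"
    unfolding X0_def
  proof (rule Baire_category[where X = "top_of_set X", simplified])
    have "compact_space (top_of_set X)" using assms(1) by (simp add: compact_space_subtopology)
    then show "completely_metrizable_space (top_of_set X) \<or>
      locally_compact_space (top_of_set X) \<and> regular_space (top_of_set X)"
      by (simp add: compact_imp_locally_compact_space regular_space_subtopology regular_space_euclidean)
  qed (use assms(2) G_open_dense in auto)
  then have "X \<subseteq> closure X0" using \<open>X0 \<subseteq> X\<close> by (auto simp: closure_of_subtopology Int_absorb1)
  moreover have "x \<in> U j" if "x \<in> X0" "j \<in> J" "x \<in> closure (U j)" for x j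
    using that by (auto simp: X0_def G_def)
  ultimately show ?thesis using that by blast
qed

lemma funpow_image_subset:
  assumes "f ` X \<subseteq> X"
  shows "(f ^^ k) ` X \<subseteq> X"
  by (induction k) (use assms in auto)

lemma continuous_on_funpow:
  assumes "continuous_on X f" "f ` X \<subseteq> X"
  shows "continuous_on X (f ^^ k)"
proof (induction k)
  case 0 then show ?case by simp
next
  case (Suc k)
  have "f ^^ Suc k = f \<circ> (f ^^ k)" by simp
  then show ?case
    using Suc funpow_image_subset[OF assms(2), of k] assms(1)
    by (metis continuous_on_compose continuous_on_subset)
qed

lemma tds_inv_into:
  assumes "tds X T" "x \<in> X"
  shows "T x \<in> X" "inv_into X T x \<in> X" "T (inv_into X T x) = x" "inv_into X T (T x) = x"
  using assms unfolding tds_def by (metis imageI inv_into_into f_inv_into_f inv_into_f_f)+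

lemma tds_continuous_on_inv_into:
  assumes "tds X T"
  shows "continuous_on X (inv_into X T)"
  using assms continuous_on_inv[of X T "inv_into X T"] by (auto simp: tds_def)

lemma tpow_in:
  assumes "tds X T" "x \<in> X"
  shows "tpow X T n x \<in> X"
proof -
  have "T ` X \<subseteq> X" "inv_into X T ` X \<subseteq> X" using tds_inv_into[OF assms(1)] by auto
  then show ?thesis
    using funpow_image_subset[of T X] funpow_image_subset[of "inv_into X T" X] assms(2)
    by (auto simp: tpow_def image_subset_iff)
qed

lemma tpow_0 [simp]: "tpow X T 0 x = x"
  by (simp add: tpow_def)

lemma continuous_on_tpow:
  assumes "tds X T"
  shows "continuous_on X (tpow X T n)"
proof -
  have "T ` X \<subseteq> X" "inv_into X T ` X \<subseteq> X" using tds_inv_into[OF assms] by auto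
  moreover have "continuous_on X T" using assms by (simp add: tds_def)
  ultimately have "continuous_on X (T ^^ k)" "continuous_on X (inv_into X T ^^ k)" for k
    using tds_continuous_on_inv_into[OF assms] continuous_on_funpow by blast+
  then show ?thesis
    by (cases "n \<ge> 0") (simp_all add: tpow_def[abs_def])
qed

lemma tpow_plus1:
  assumes "tds X T" "x \<in> X"
  shows "tpow X T (n + 1) x = T (tpow X T n x)"
proof (cases "n \<ge> 0")
  case True
  then have "nat (n + 1) = Suc (nat n)" by simp
  then show ?thesis using True by (simp add: tpow_def)
next
  case False
  then have "nat (- n) = Suc (nat (- (n + 1)))" by simp
  moreover have "(inv_into X T ^^ nat (- (n + 1))) x \<in> X"
    using funpow_image_subset[of "inv_into X T" X] tds_inv_into(2)[OF assms(1)] assms(2) by blast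
  ultimately show ?thesis using False tds_inv_into[OF assms(1)] by (simp add: tpow_def)
qed

lemma tpow_minus1:
  assumes "tds X T" "x \<in> X"
  shows "tpow X T (n - 1) x = inv_into X T (tpow X T n x)"
  using tpow_plus1[OF assms, of "n - 1"] tds_inv_into(4)[OF assms(1) tpow_in[OF assms]] by simp

lemma tpow_add:
  assumes "tds X T" "x \<in> X"
  shows "tpow X T (a + b) x = tpow X T a (tpow X T b x)"
proof (induction a rule: int_induct[where k = 0])
  case base then show ?case by simp
next
  case (step1 i)
  have "tpow X T (i + 1 + b) x = T (tpow X T (i + b) x)"
    using tpow_plus1[OF assms, of "i + b"] by (simp add: ac_simps)
  then show ?case using step1 tpow_plus1[OF assms(1) tpow_in[OF assms]] by simp
next
  case (step2 i)
  have "tpow X T (i - 1 + b) x = inv_into X T (tpow X T (i + b) x)"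
    using tpow_minus1[OF assms, of "i + b"] by (simp add: algebra_simps)
  then show ?case using step2 tpow_minus1[OF assms(1) tpow_in[OF assms]] by simp
qed

definition diagonal_visits :: "'a::metric_space set \<Rightarrow> ('a \<Rightarrow> 'a) \<Rightarrow> nat \<Rightarrow> (nat \<Rightarrow> 'a) \<Rightarrow> real \<Rightarrow> 'a set"
  where "diagonal_visits X T D c e =
           {x \<in> X. \<exists>n. \<forall>j\<in>{1..D}. dist (tpow X T (int j * n) x) (c j) < e}"

lemma openin_diagonal_visits:
  assumes "tds X T"
  shows "openin (top_of_set X) (diagonal_visits X T D c e)"
proof -
  define P where "P n = X \<inter> (\<lambda>x j. tpow X T (int j * n) x) -`
                          {f. \<forall>j\<in>{1..D}. f (id j) \<in> ball (c j) e}" for n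
  have "diagonal_visits X T D c e = \<Union> (range P)"
    by (auto simp: diagonal_visits_def P_def dist_commute)
  moreover have "openin (top_of_set X) (P n)" for n
    unfolding P_def
  proof (rule continuous_openin_preimage_gen)
    show "continuous_on X (\<lambda>x j. tpow X T (int j * n) x)"
      by (intro continuous_on_coordinatewise_then_product continuous_on_tpow[OF assms])
    show "open {f. \<forall>j\<in>{1..D}. f (id j) \<in> ball (c j) e}"
      by (rule product_topology_basis') auto
  qed
  ultimately show ?thesis by auto
qed

lemma diagonal_visits_mono:
  assumes "\<And>j. j \<in> {1..D} \<Longrightarrow> dist (y j) (c j) + \<delta> \<le> e"
  shows "diagonal_visits X T D y \<delta> \<subseteq> diagonal_visits X T D c e"
proof
  fix x assume "x \<in> diagonal_visits X T D y \<delta>"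
  then obtain n where x: "x \<in> X"
    and close: "\<forall>j\<in>{1..D}. dist (tpow X T (int j * n) x) (y j) < \<delta>"
    by (auto simp: diagonal_visits_def)
  have "\<forall>j\<in>{1..D}. dist (tpow X T (int j * n) x) (c j) < e"
  proof
    fix j assume j: "j \<in> {1..D}"
    show "dist (tpow X T (int j * n) x) (c j) < e"
      using dist_triangle[of "tpow X T (int j * n) x" "c j" "y j"] close[rule_format, OF j] assms[OF j]
      by linarith
  qed
  then show "x \<in> diagonal_visits X T D c e" unfolding diagonal_visits_def using x by blast
qed

lemma Lx_iff_diagonal_visits:
  assumes "x \<in> X"
  shows "y \<in> Lx X T d x \<longleftrightarrow>
           y \<in> extensional {1..d-1} \<and> (\<forall>e>0. x \<in> diagonal_visits X T (d-1) y e)"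
proof -
  let ?L = "{restrict (\<lambda>j. tpow X T (int j * n) x) {1..d-1} | n. True}"
  have visits: "(\<exists>s\<in>?L. \<forall>j\<in>{1..d-1}. dist (s j) (y j) < e) \<longleftrightarrow>
      x \<in> diagonal_visits X T (d-1) y e" for e
  proof
    assume "x \<in> diagonal_visits X T (d-1) y e"
    then obtain n where "\<forall>j\<in>{1..d-1}. dist (tpow X T (int j * n) x) (y j) < e"
      by (auto simp: diagonal_visits_def)
    then show "\<exists>s\<in>?L. \<forall>j\<in>{1..d-1}. dist (s j) (y j) < e"
      by (intro bexI[of _ "restrict (\<lambda>j. tpow X T (int j * n) x) {1..d-1}"]) auto
  next
    assume "\<exists>s\<in>?L. \<forall>j\<in>{1..d-1}. dist (s j) (y j) < e"
    then obtain n where "\<forall>j\<in>{1..d-1}. dist (restrict (\<lambda>j. tpow X T (int j * n) x) {1..d-1} j) (y j) < e"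
      by blast
    then have "\<forall>j\<in>{1..d-1}. dist (tpow X T (int j * n) x) (y j) < e" by simp
    then show "x \<in> diagonal_visits X T (d-1) y e" unfolding diagonal_visits_def using assms by blast
  qed
  have "?L \<subseteq> extensional {1..d-1}" by auto
  from in_closure_extensional_iff[OF finite_atLeastAtMost this, of y] show ?thesis
    by (simp only: Lx_def visits)
qed

lemma in_Nd_iff:
  "z \<in> Nd X T d \<longleftrightarrow> z \<in> extensional {1..d} \<and>
     (\<forall>e>0. \<exists>x\<in>X. \<exists>p q. \<forall>i\<in>{1..d}. dist (tpow X T (p + int i * q) x) (z i) < e)"
  unfolding Nd_def by (subst in_closure_extensional_iff[of "{1..d}"]) (auto, fastforce+)

lemma Nd_coordinate_in:
  assumes "tds X T" "z \<in> Nd X T d" "i \<in> {1..d}"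
  shows "z i \<in> X"
  using assms(2) unfolding Nd_def
proof (rule closure_coordinate_in_closed)
  show "closed X" using assms(1) by (simp add: tds_def compact_imp_closed)
qed (use assms(3) tpow_in[OF assms(1)] in auto)

lemma tcons_Lx_subset_Nd_fibre:
  assumes "tds X T" "x \<in> X" "d \<ge> 1"
  shows "tcons d x ` Lx X T d x \<subseteq> {z \<in> Nd X T d. z 1 = x}"
proof clarify
  fix y assume "y \<in> Lx X T d x"
  then have approx: "\<And>e. e > 0 \<Longrightarrow>
      \<exists>n. \<forall>j\<in>{1..d-1}. dist (tpow X T (int j * n) x) (y j) < e"
    using assms(2) by (auto simp: Lx_iff_diagonal_visits diagonal_visits_def)
  have "\<exists>p q. \<forall>i\<in>{1..d}. dist (tpow X T (p + int i * q) x) (tcons d x y i) < e" if "e > 0" for e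
  proof -
    obtain n where n: "\<forall>j\<in>{1..d-1}. dist (tpow X T (int j * n) x) (y j) < e"
      using approx[OF \<open>e > 0\<close>] by blast
    have "dist (tpow X T (- n + int i * n) x) (tcons d x y i) < e" if i: "i \<in> {1..d}" for i
    proof (cases "i = 1")
      case True then show ?thesis using \<open>e > 0\<close> assms(3) by (simp add: tcons_def)
    next
      case False
      then have j: "i - 1 \<in> {1..d-1}" and "- n + int i * n = int (i - 1) * n"
        using i by (auto simp: algebra_simps of_nat_diff)
      moreover have "dist (tpow X T (int (i - 1) * n) x) (y (i - 1)) < e"
        using n j by blast
      ultimately show ?thesis using False i by (simp add: tcons_def)
    qed
    then show ?thesis by blast
  qed
  moreover have "tcons d x y \<in> extensional {1..d}" by (simp add: tcons_def)
  ultimately have "tcons d x y \<in> Nd X T d"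
    using assms(2) unfolding in_Nd_iff by blast
  moreover have "tcons d x y 1 = x" using assms(3) by (simp add: tcons_def)
  ultimately show "tcons d x y \<in> Nd X T d \<and> tcons d x y 1 = x" by blast
qed

lemma extensional_eq_tcons:
  assumes "z \<in> extensional {1..d}"
  shows "z = tcons d (z 1) (restrict (\<lambda>j. z (Suc j)) {1..d-1})"
proof
  fix i show "z i = tcons d (z 1) (restrict (\<lambda>j. z (Suc j)) {1..d-1}) i"
    using assms by (cases "i \<in> {1..d}") (auto simp: tcons_def extensional_def)
qed

lemma Nd_fibre_in_closure_diagonal_visits:
  assumes "tds X T" "z \<in> Nd X T d" "d \<ge> 1" "e > 0"
    and close: "\<And>j. j \<in> {1..d-1} \<Longrightarrow> dist (z (Suc j)) (c j) < e"
  shows "z 1 \<in> closure (diagonal_visits X T (d-1) c e)"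
  unfolding closure_approachable
proof (intro allI impI)
  fix \<delta> :: real assume "\<delta> > 0"
  define r where "r = Min (insert e ((\<lambda>j. e - dist (z (Suc j)) (c j)) ` {1..d-1}))"
  have "r > 0" using close \<open>e > 0\<close> by (auto simp: r_def)
  have r_le: "r \<le> e - dist (z (Suc j)) (c j)" if "j \<in> {1..d-1}" for j
    unfolding r_def by (rule Min_le) (use that in auto)
  have "min \<delta> r > 0" using \<open>\<delta> > 0\<close> \<open>r > 0\<close> by simp
  moreover have "\<forall>e>0. \<exists>x\<in>X. \<exists>p q. \<forall>i\<in>{1..d}. dist (tpow X T (p + int i * q) x) (z i) < e"
    using assms(2) unfolding in_Nd_iff by (rule conjunct2)
  ultimately obtain x0 p q where x0: "x0 \<in> X"
    and approx: "\<forall>i\<in>{1..d}. dist (tpow X T (p + int i * q) x0) (z i) < min \<delta> r"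
    by blast
  define x' where "x' = tpow X T (p + q) x0"
  have "dist x' (z 1) < \<delta>" using approx[rule_format, of 1] assms(3) by (simp add: x'_def)
  moreover have "x' \<in> diagonal_visits X T (d-1) c e"
  proof -
    have "dist (tpow X T (int j * q) x') (c j) < e" if j: "j \<in> {1..d-1}" for j
    proof -
      have eq: "tpow X T (int j * q) x' = tpow X T (p + int (Suc j) * q) x0"
        using tpow_add[OF assms(1) x0, of "int j * q" "p + q"] by (simp add: x'_def algebra_simps)
      have "dist (tpow X T (p + int (Suc j) * q) x0) (z (Suc j)) < r"
        using approx[rule_format, of "Suc j"] j by auto
      then show ?thesis
        unfolding eq
        using r_le[OF j] dist_triangle[of "tpow X T (p + int (Suc j) * q) x0" "c j" "z (Suc j)"]
        by linarith
    qed
    moreover have "x' \<in> X" using tpow_in[OF assms(1) x0] by (simp add: x'_def)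
    ultimately show ?thesis unfolding diagonal_visits_def by blast
  qed
  ultimately show "\<exists>x'\<in>diagonal_visits X T (d-1) c e. dist x' (z 1) < \<delta>" by blast
qed

lemma Nd_fibre_eq_at_generic_point:
  assumes "tds X T" "d \<ge> 1" "x \<in> X" "X \<subseteq> closure C"
    and generic: "\<And>c q. c \<in> (\<Pi>\<^sub>E j\<in>{1..d-1}. C) \<Longrightarrow> q \<in> \<rat> \<Longrightarrow> q > 0 \<Longrightarrow>
      x \<in> closure (diagonal_visits X T (d-1) c q) \<Longrightarrow> x \<in> diagonal_visits X T (d-1) c q"
  shows "{z \<in> Nd X T d. z 1 = x} = tcons d x ` Lx X T d x"
proof
  show "tcons d x ` Lx X T d x \<subseteq> {z \<in> Nd X T d. z 1 = x}"
    using tcons_Lx_subset_Nd_fibre[OF assms(1,3,2)] .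
  show "{z \<in> Nd X T d. z 1 = x} \<subseteq> tcons d x ` Lx X T d x"
  proof
    fix z assume "z \<in> {z \<in> Nd X T d. z 1 = x}"
    then have z: "z \<in> Nd X T d" and z1: "z 1 = x" by auto
    define y where "y = restrict (\<lambda>j. z (Suc j)) {1..d-1}"
    have "z \<in> extensional {1..d}" using z by (simp add: in_Nd_iff)
    then have z_eq: "z = tcons d x y"
      unfolding y_def z1[symmetric] by (rule extensional_eq_tcons)
    have "x \<in> diagonal_visits X T (d-1) y e" if "e > 0" for e
    proof -
      obtain q where q: "q \<in> \<rat>" "0 < q" "q < e / 2"
        using Rats_dense_in_real[of 0 "e / 2"] \<open>e > 0\<close> by auto
      have y_approx: "y j \<in> closure C" if "j \<in> {1..d-1}" for j
        using Nd_coordinate_in[OF assms(1) z, of "Suc j"] that assms(4) by (auto simp: y_def)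
      from closure_approachable_PiE[of "{1..d-1}" y C, OF y_approx q(2)] obtain c
        where c: "c \<in> (\<Pi>\<^sub>E j\<in>{1..d-1}. C)" and yc: "\<forall>j\<in>{1..d-1}. dist (y j) (c j) < q"
        by blast
      have "x \<in> closure (diagonal_visits X T (d-1) c q)"
        using Nd_fibre_in_closure_diagonal_visits[OF assms(1) z assms(2) q(2), of c] yc z1
        by (simp add: y_def)
      then have "x \<in> diagonal_visits X T (d-1) c q" by (rule generic[OF c q(1,2)])
      moreover have "diagonal_visits X T (d-1) c q \<subseteq> diagonal_visits X T (d-1) y e"
      proof (rule diagonal_visits_mono)
        fix j assume "j \<in> {1..d-1}"
        then have "dist (y j) (c j) < q" by (rule yc[rule_format])
        then show "dist (c j) (y j) + q \<le> e" using q(3) by (simp add: dist_commute)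
      qed
      ultimately show ?thesis by blast
    qed
    then have "y \<in> Lx X T d x"
      using Lx_iff_diagonal_visits[OF assms(3)] by (simp add: y_def)
    then show "z \<in> tcons d x ` Lx X T d x" using z_eq by blast
  qed
qed

theorem lemma4p4:
  fixes X :: "'a::metric_space set" and T :: "'a \<Rightarrow> 'a" and d :: nat
  assumes "minimal_system X T" and "d \<ge> 2"
  shows "\<exists>X0. X0 \<subseteq> X \<and> gdelta_in (top_of_set X) X0 \<and> X \<subseteq> closure X0 \<and>
           (\<forall>x\<in>X0. {z \<in> Nd X T d. z 1 = x} = tcons d x ` Lx X T d x)"
proof -
  have tds: "tds X T" using assms(1) by (simp add: minimal_system_def)
  then have "compact X" by (simp add: tds_def)
  then obtain C where "countable C" "X \<subseteq> closure C"
    by (rule compact_imp_countable_dense_subset)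
  define J where "J = (\<Pi>\<^sub>E j\<in>{1..d-1}. C) \<times> (\<rat> \<inter> {0::real<..})"
  have "countable J"
    unfolding J_def using \<open>countable C\<close> countable_rat
    by (intro countable_SIGMA countable_PiE) auto
  have open_visits: "openin (top_of_set X) (case_prod (diagonal_visits X T (d-1)) cq)" for cq
    using openin_diagonal_visits[OF tds] by (simp add: split_beta)
  obtain X0 where X0: "X0 \<subseteq> X" "gdelta_in (top_of_set X) X0" "X \<subseteq> closure X0"
    and stable: "\<And>x cq. x \<in> X0 \<Longrightarrow> cq \<in> J \<Longrightarrow>
      x \<in> closure (case_prod (diagonal_visits X T (d-1)) cq) \<Longrightarrow>
      x \<in> case_prod (diagonal_visits X T (d-1)) cq"
    using Baire_stable_points[of X J "case_prod (diagonal_visits X T (d-1))"]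
      \<open>compact X\<close> \<open>countable J\<close> open_visits by blast
  have "{z \<in> Nd X T d. z 1 = x} = tcons d x ` Lx X T d x" if x: "x \<in> X0" for x
  proof (rule Nd_fibre_eq_at_generic_point[OF tds _ _ \<open>X \<subseteq> closure C\<close>])
    show "d \<ge> 1" using assms(2) by simp
    show "x \<in> X" using X0(1) x by blast
    fix c q assume "c \<in> (\<Pi>\<^sub>E j\<in>{1..d-1}. C)" "q \<in> \<rat>" "q > 0"
      and "x \<in> closure (diagonal_visits X T (d-1) c q)"
    then show "x \<in> diagonal_visits X T (d-1) c q"
      using stable[OF x, of "(c, q)"] by (simp add: J_def)
  qed
  with X0 show ?thesis by blast
qed

end
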